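(* Let $\mu$ be a Borel probability measure on $\mathbb{R}^{n+d}$ for some $n\in\mathbb{N}$ and $d\in\mathbb{N}^+$. Then $$\dim_P\mu=\sup\Big\{\gamma:\ \liminf_{r\to0+} r^{-\gamma}G_d^\mu(x,r)=0 \text{ for } \mu\text{-a.e. } x\in\mathbb{R}^{n+d}\Big\}.$$
   Context: $\mathbb{R}^0=\{0\}$. $\dim_P\mu=\inf\{\dim_P E: E\subset\mathbb{R}^{n+d}\text{ Borel}, \mu(E)>0\}$, where $\dim_P E$ is packing dimension. $D(u,r)$ denotes the closed ball of radius $r$ about $u$ in the maximum norm $\|x\|=\max_i|x_i|$. For $x\in\mathbb{R}^d$, $I_d(x)=\prod_{i=1}^d\min\{1,|x_i|^{-1}\}$ with the convention $\min\{1,0^{-1}\}=1$. For $x=(u,v)\in\mathbb{R}^n\times\mathbb{R}^d$ and $r>0$, $\mu_{u,r}$ is the Borel measure on $\mathbb{R}^d$ given by $\mu_{u,r}(E)=\mu(D(u,r)\times E)$, and $$G_d^\mu(x,r)=\int_{\mathbb{R}^d} I_d\Big(\frac{y-v}{r}\Big)\,d\mu_{u,r}(y).$$ *)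

theory Defs
  imports "HOL-Probability.Probability"
begin

definition cover_num :: "'a::metric_space set \<Rightarrow> real \<Rightarrow> nat" where
  "cover_num F \<delta> = (LEAST k. \<exists>C. finite C \<and> card C = k \<and> F \<subseteq> (\<Union>c\<in>C. cball c \<delta>))"

definition upper_box_dim :: "'a::metric_space set \<Rightarrow> ereal" where
  "upper_box_dim F =
     (if F = {} then 0
      else if bounded F then
        Limsup (at_right 0) (\<lambda>\<delta>. ereal (ln (real (cover_num F \<delta>)) / - ln \<delta>))
      else \<infinity>)"

text \<open>Packing dimension as modified upper box dimension.\<close>
definition packing_dim :: "'a::metric_space set \<Rightarrow> ereal" where
  "packing_dim E = (INF F\<in>{F :: nat \<Rightarrow> 'a set. E \<subseteq> (\<Union>i. F i)}. SUP i. upper_box_dim (F i))"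

definition packing_dim_measure :: "'a::metric_space measure \<Rightarrow> ereal" where
  "packing_dim_measure \<mu> = (INF E\<in>{E. E \<in> sets borel \<and> measure \<mu> E > 0}. packing_dim E)"

definition Ifac :: "real \<Rightarrow> real" where
  "Ifac t = (if t = 0 then 1 else min 1 (1 / \<bar>t\<bar>))"

text \<open>R^{n+d} is real^'m; the index set U holds the n u-coordinates, its complement
  the d v-coordinates. G(x,r) = integral of I_d((y-v)/r) d mu_{u,r}(y), written out as an
  integral of mu over the slab D(u,r) x R^d.\<close>
definition Gfun :: "'m set \<Rightarrow> (real^'m::finite) measure \<Rightarrow> real^'m \<Rightarrow> real \<Rightarrow> ennreal" where
  "Gfun U \<mu> x r =
     (\<integral>\<^sup>+ z. indicator {z. \<forall>i\<in>U. \<bar>z$i - x$i\<bar> \<le> r} z *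
              ennreal (\<Prod>i\<in>-U. Ifac ((z$i - x$i) / r)) \<partial>\<mu>)"

end

theory Submission
  imports Defs "HOL-Real_Asymp.Real_Asymp"
begin

text \<open>
  Since \<open>\<mu>(D(x,r)) \<le> G(x,r)\<close>, if \<open>r\<^sup>-\<^sup>\<gamma> G(x,r)\<close> has lower limit \<open>0\<close> at almost every \<open>x\<close>,
  then almost every \<open>x\<close> has \<open>\<mu>(D(x,r)) < r\<^sup>\<gamma>\<close> at arbitrarily small scales. A set \<open>F\<close> of upper
  box dimension \<open>< \<gamma>\<close> is covered by about \<open>\<rho>\<^sup>-\<^sup>g\<close> balls of radius \<open>\<rho>\<close> with \<open>g < \<gamma>\<close>, so at the dyadic
  scale \<open>\<rho>\<close> its points of small cube measure lie in a set of measure about \<open>\<rho>\<^sup>\<gamma>\<^sup>-\<^sup>g\<close>; by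
  Borel--Cantelli they form a null set. Hence every set of positive measure has packing
  dimension \<open>\<ge> \<gamma>\<close>.

  Conversely, if the lower limit is positive on a set of positive measure, then on a
  bounded piece \<open>P\<close> of it \<open>G(x,r) \<ge> c r\<^sup>\<gamma>\<close> for all small \<open>r\<close>. The kernel of \<open>G\<close> decays like
  \<open>1/|t|\<close> in each \<open>v\<close>-coordinate, so the kernels of points of \<open>P\<close> lying in distinct cells of the
  \<open>r\<close>-grid add up to at most \<open>(C log(1/r))\<^sup>n\<^sup>+\<^sup>d\<close>. Integrating, \<open>P\<close> meets at most
  \<open>r\<^sup>-\<^sup>\<gamma> (C log(1/r))\<^sup>n\<^sup>+\<^sup>d / c\<close> grid cells, so the closure of \<open>P\<close> has upper box dimension \<open>\<le> \<gamma>\<close>.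
\<close>

section \<open>Cubes and the kernel of \<open>G\<close>\<close>

definition cube :: "real^'m::finite \<Rightarrow> real \<Rightarrow> (real^'m) set" where
  "cube x r = {z. \<forall>i. \<bar>z$i - x$i\<bar> \<le> r}"

lemma closed_slab: "closed {z::real^'m::finite. \<forall>i\<in>I. \<bar>z$i - x$i\<bar> \<le> r}"
proof -
  have "{z::real^'m. \<forall>i\<in>I. \<bar>z$i - x$i\<bar> \<le> r} = (\<Inter>i\<in>I. {z. \<bar>z$i - x$i\<bar> \<le> r})"
    by auto
  moreover have "closed {z::real^'m. \<bar>z$i - x$i\<bar> \<le> r}" for i
    by (intro closed_Collect_le continuous_intros)
  ultimately show ?thesis by auto
qed

lemma closed_cube: "closed (cube x r)"
  using closed_slab[of UNIV x r] by (simp add: cube_def)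

lemma cube_borel [measurable]: "cube x r \<in> sets borel"
  using closed_cube by (rule borel_closed)

lemma cube_mono: "r \<le> s \<Longrightarrow> cube x r \<subseteq> cube x s"
  unfolding cube_def by (blast intro: order_trans)

lemma mem_cube_if_dist_le:
  assumes "dist x z \<le> r"
  shows "z \<in> cube x r"
proof -
  have "\<bar>z$i - x$i\<bar> \<le> r" for i
    using component_le_norm_cart[of "z - x" i] assms by (simp add: dist_norm norm_minus_commute)
  then show ?thesis by (simp add: cube_def)
qed

lemma Ifac_nonneg: "0 \<le> Ifac t"
  by (simp add: Ifac_def)

lemma Ifac_le_1: "Ifac t \<le> 1"
  by (simp add: Ifac_def)

lemma Ifac_eq_1: "\<bar>t\<bar> \<le> 1 \<Longrightarrow> Ifac t = 1"
  by (auto simp: Ifac_def min_def field_simps)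

lemma Ifac_le_inverse: "t \<noteq> 0 \<Longrightarrow> Ifac t \<le> 1 / \<bar>t\<bar>"
  by (simp add: Ifac_def)

lemma borel_measurable_Ifac [measurable]: "Ifac \<in> borel_measurable borel"
  unfolding Ifac_def[abs_def] by measurable

definition Gkernel :: "'m set \<Rightarrow> real^'m::finite \<Rightarrow> real \<Rightarrow> real^'m \<Rightarrow> ennreal" where
  "Gkernel U x r z = indicator {z. \<forall>i\<in>U. \<bar>z$i - x$i\<bar> \<le> r} z *
     ennreal (\<Prod>i\<in>-U. Ifac ((z$i - x$i) / r))"

lemma Gfun_eq_nn_integral_Gkernel: "Gfun U \<mu> x r = (\<integral>\<^sup>+ z. Gkernel U x r z \<partial>\<mu>)"
  unfolding Gfun_def Gkernel_def ..

lemma borel_measurable_Gkernel: "Gkernel U x r \<in> borel_measurable borel"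
proof -
  have [measurable]: "{z. \<forall>i\<in>U. \<bar>z$i - x$i\<bar> \<le> r} \<in> sets borel"
    using closed_slab by (rule borel_closed)
  show ?thesis unfolding Gkernel_def[abs_def] by measurable
qed

lemma emeasure_cube_le_Gfun:
  assumes "sets \<mu> = sets borel" "r > 0"
  shows "emeasure \<mu> (cube x r) \<le> Gfun U \<mu> x r"
proof -
  have "indicator (cube x r) z \<le> Gkernel U x r z" for z
  proof (cases "z \<in> cube x r")
    case True
    then have "\<bar>z$i - x$i\<bar> \<le> r" for i by (simp add: cube_def)
    moreover from this have "Ifac ((z$i - x$i) / r) = 1" for i
      using assms(2) by (intro Ifac_eq_1) (simp add: abs_divide)
    ultimately show ?thesis using True by (simp add: Gkernel_def)
  qed simp
  then have "(\<integral>\<^sup>+ z. indicator (cube x r) z \<partial>\<mu>) \<le> (\<integral>\<^sup>+ z. Gkernel U x r z \<partial>\<mu>)"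
    by (intro nn_integral_mono)
  then show ?thesis
    using assms(1) by (simp add: Gfun_eq_nn_integral_Gkernel sets_eq_imp_space_eq)
qed

section \<open>Covering numbers and dyadic scales\<close>

lemma cover_num_cover:
  fixes F :: "'a::heine_borel set"
  assumes "bounded F" "\<delta> > 0"
  shows "\<exists>C. finite C \<and> card C = cover_num F \<delta> \<and> F \<subseteq> (\<Union>c\<in>C. cball c \<delta>)"
proof -
  obtain R x0 where R: "F \<subseteq> cball x0 R"
    using assms(1) unfolding bounded_subset_cball by blast
  have "cball x0 R \<subseteq> (\<Union>c\<in>cball x0 R. ball c \<delta>)"
    using assms(2) centre_in_ball by blast
  then obtain C where C: "C \<subseteq> cball x0 R" "finite C" "cball x0 R \<subseteq> (\<Union>c\<in>C. ball c \<delta>)"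
    using compactE_image[OF compact_cball, of "cball x0 R" "\<lambda>c. ball c \<delta>"] by blast
  moreover have "(\<Union>c\<in>C. ball c \<delta>) \<subseteq> (\<Union>c\<in>C. cball c \<delta>)"
    by (intro UN_mono order_refl ball_subset_cball)
  ultimately have "F \<subseteq> (\<Union>c\<in>C. cball c \<delta>)"
    using R by (meson subset_trans)
  with C(2) have "finite C \<and> F \<subseteq> (\<Union>c\<in>C. cball c \<delta>)" by blast
  then have "\<exists>k C. finite C \<and> card C = k \<and> F \<subseteq> (\<Union>c\<in>C. cball c \<delta>)" by blast
  from LeastI_ex[OF this] show ?thesis unfolding cover_num_def by blast
qed

lemma cover_num_le:
  assumes "finite C" "F \<subseteq> (\<Union>c\<in>C. cball c \<delta>)"
  shows "cover_num F \<delta> \<le> card C"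
  unfolding cover_num_def using assms by (intro Least_le) blast

lemma cover_num_ge_1:
  fixes F :: "'a::heine_borel set"
  assumes "bounded F" "\<delta> > 0" "F \<noteq> {}"
  shows "cover_num F \<delta> \<ge> 1"
proof -
  obtain C where "finite C" "card C = cover_num F \<delta>" "F \<subseteq> (\<Union>c\<in>C. cball c \<delta>)"
    using cover_num_cover[OF assms(1,2)] by blast
  moreover from this assms(3) have "C \<noteq> {}" by auto
  ultimately show ?thesis by (metis card_gt_0_iff less_eq_Suc_le One_nat_def)
qed

lemma cover_num_le_powr_if_upper_box_dim_less:
  fixes F :: "'a::heine_borel set"
  assumes "upper_box_dim F < ereal g" "F \<noteq> {}"
  obtains b where "b > 0" "\<And>\<delta>. 0 < \<delta> \<Longrightarrow> \<delta> < b \<Longrightarrow> real (cover_num F \<delta>) \<le> \<delta> powr (-g)"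
proof -
  have bounded: "bounded F"
    using assms by (auto simp: upper_box_dim_def split: if_splits)
  then have "Limsup (at_right 0) (\<lambda>\<delta>. ereal (ln (real (cover_num F \<delta>)) / - ln \<delta>)) < ereal g"
    using assms by (simp add: upper_box_dim_def)
  then have "eventually (\<lambda>\<delta>. ln (real (cover_num F \<delta>)) / - ln \<delta> < g) (at_right 0)"
    by (auto dest: Limsup_lessD)
  then obtain b where b: "b > 0"
    "\<And>\<delta>. \<delta> > 0 \<Longrightarrow> \<delta> < b \<Longrightarrow> ln (real (cover_num F \<delta>)) / - ln \<delta> < g"
    unfolding eventually_at_right_field by auto
  show thesis
  proof (rule that[of "min b 1"])
    fix \<delta> :: real
    assume \<delta>: "0 < \<delta>" "\<delta> < min b 1"
    have N: "real (cover_num F \<delta>) \<ge> 1"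
      using cover_num_ge_1[OF bounded \<delta>(1) assms(2)] by simp
    have "- ln \<delta> > 0" using \<delta> by simp
    then have "ln (real (cover_num F \<delta>)) < g * (- ln \<delta>)"
      using b(2)[of \<delta>] \<delta> by (simp only: pos_divide_less_eq)
    then have "exp (ln (real (cover_num F \<delta>))) < exp (g * (- ln \<delta>))" by simp
    then show "real (cover_num F \<delta>) \<le> \<delta> powr (-g)"
      using N \<delta>(1) by (simp add: powr_def)
  qed (use b(1) in simp)
qed

lemma exists_dyadic_scale:
  fixes r :: real
  assumes "0 < r" "r < (1/2)^n"
  shows "\<exists>k\<ge>n. (1/2)^(k+1) < r \<and> r \<le> (1/2)^k"
proof -
  obtain j where j: "(1/2::real)^j < r"
    using real_arch_pow_inv[OF assms(1), of "1/2"] by auto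
  define K where "K = {k. r \<le> (1/2::real)^k}"
  have "k < j" if "k \<in> K" for k
  proof (rule ccontr)
    assume "\<not> k < j"
    then have "(1/2::real)^k \<le> (1/2)^j" by (intro power_decreasing) auto
    with j that show False by (simp add: K_def)
  qed
  then have "K \<subseteq> {..<j}" by blast
  then have fin: "finite K" by (rule finite_subset) simp
  have "n \<in> K" using assms by (simp add: K_def)
  then have "Max K \<in> K" "n \<le> Max K"
    using fin by (auto intro: Max_in)
  moreover have "Max K + 1 \<notin> K"
    using Max_ge[OF fin, of "Max K + 1"] by linarith
  ultimately show ?thesis by (intro exI[of _ "Max K"]) (simp add: K_def)
qed

lemma powr_le_dyadic:
  fixes r g :: real
  assumes "(1/2)^(k+1) < r" "r \<le> (1/2)^k"
  shows "r powr g \<le> 2 powr \<bar>g\<bar> * ((1/2)^k) powr g"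
proof (cases "g \<ge> 0")
  case True
  have "0 < r" using assms(1) zero_less_power[of "1/2::real" "k+1"] by linarith
  then have "r powr g \<le> ((1/2)^k) powr g" using True assms(2) by (intro powr_mono2) auto
  also have "\<dots> \<le> 2 powr \<bar>g\<bar> * ((1/2)^k) powr g"
    using ge_one_powr_ge_zero[of 2 "\<bar>g\<bar>"] by (intro mult_le_cancel_right1[THEN iffD2]) auto
  finally show ?thesis .
next
  case False
  have "r powr g \<le> ((1/2)^(k+1)) powr g" using False assms(1) by (intro powr_mono2') auto
  also have "\<dots> = ((1/2)^k) powr g / 2 powr g" by (simp add: powr_divide)
  also have "\<dots> = 2 powr \<bar>g\<bar> * ((1/2)^k) powr g"
    using False by (simp add: powr_minus_divide)
  finally show ?thesis .
qed

lemma half_power_powr: "((1/2::real)^k) powr a = (2 powr (-a))^k"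
proof -
  have "((1/2::real)^k) powr a = exp (real k * (- a * ln 2))"
    by (simp add: powr_def ln_realpow ln_div)
  also have "\<dots> = (2 powr (-a))^k"
    unfolding exp_of_nat_mult by (simp add: powr_def)
  finally show ?thesis .
qed

section \<open>Lower bound for the packing dimension\<close>

lemma light_points_in_cubes:
  fixes \<mu> :: "(real^'m::finite) measure" and a s :: real
  assumes "finite_measure \<mu>" "sets \<mu> = sets borel" "a \<ge> 0"
    and "finite C" "F \<subseteq> (\<Union>c\<in>C. cball c (s/2))"
  obtains S where "S \<in> sets \<mu>" "{x\<in>F. measure \<mu> (cube x s) < a} \<subseteq> S"
    "measure \<mu> S \<le> card C * a"
proof -
  interpret finite_measure \<mu> by (rule assms(1))
  define T where "T = {x\<in>F. measure \<mu> (cube x s) < a}"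
  define A where "A = {c\<in>C. cball c (s/2) \<inter> T \<noteq> {}}"
  have "\<forall>c\<in>A. \<exists>y. y \<in> cball c (s/2) \<inter> T" by (auto simp: A_def)
  then obtain p where p: "\<And>c. c \<in> A \<Longrightarrow> p c \<in> cball c (s/2) \<inter> T"
    by metis
  \<comment> \<open>A ball of radius \<open>s/2\<close> meeting \<open>T\<close> lies in the \<open>s\<close>-cube around any of its points in \<open>T\<close>.\<close>
  define S where "S = (\<Union>c\<in>A. cube (p c) s)"
  have "finite A" using assms(4) by (simp add: A_def)
  have "S \<in> sets \<mu>"
    unfolding S_def assms(2) using \<open>finite A\<close> by (intro sets.finite_UN) simp_all
  moreover have T: "T \<subseteq> S"
  proof
    fix x assume "x \<in> T"
    then obtain c where c: "c \<in> C" "x \<in> cball c (s/2)"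
      using assms(5) by (auto simp: T_def)
    with \<open>x \<in> T\<close> have "c \<in> A" by (auto simp: A_def)
    have "dist (p c) x \<le> dist (p c) c + dist c x" by (rule dist_triangle)
    also have "\<dots> \<le> s" using p[OF \<open>c \<in> A\<close>] c(2) by (simp add: dist_commute)
    finally show "x \<in> S"
      using \<open>c \<in> A\<close> mem_cube_if_dist_le unfolding S_def by blast
  qed
  moreover have "measure \<mu> S \<le> card C * a"
  proof -
    have "measure \<mu> S \<le> (\<Sum>c\<in>A. measure \<mu> (cube (p c) s))"
      unfolding S_def using \<open>finite A\<close>
      by (intro finite_measure_subadditive_finite) (simp_all add: assms(2) image_subset_iff)
    also have "\<dots> \<le> (\<Sum>c\<in>A. a)"
      using p by (intro sum_mono) (simp add: T_def less_imp_le)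
    also have "\<dots> = card A * a" by simp
    also have "\<dots> \<le> card C * a"
      using assms(3) card_mono[OF assms(4), of A] by (intro mult_right_mono) (auto simp: A_def)
    finally show ?thesis .
  qed
  ultimately show thesis
    using that T unfolding T_def by blast
qed

lemma frequently_light_at_dyadic_scales:
  fixes \<mu> :: "(real^'m::finite) measure"
  assumes "finite_measure \<mu>" "sets \<mu> = sets borel"
    and light: "\<And>\<delta>. \<delta> > 0 \<Longrightarrow> \<exists>r>0. r < \<delta> \<and> measure \<mu> (cube x r) < r powr g"
  shows "\<exists>k\<ge>n. measure \<mu> (cube x ((1/2)^(k+1))) < 2 powr \<bar>g\<bar> * ((1/2)^k) powr g"
proof -
  interpret finite_measure \<mu> by (rule assms(1))
  obtain r where r: "r > 0" "r < (1/2)^n" "measure \<mu> (cube x r) < r powr g"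
    using light[of "(1/2)^n"] by auto
  obtain k where k: "k \<ge> n" "(1/2)^(k+1) < r" "r \<le> (1/2)^k"
    using exists_dyadic_scale[OF r(1,2)] by blast
  have "measure \<mu> (cube x ((1/2)^(k+1))) \<le> measure \<mu> (cube x r)"
    using k(2) assms(2) by (intro finite_measure_mono cube_mono) auto
  also have "\<dots> < r powr g" by (rule r(3))
  also have "\<dots> \<le> 2 powr \<bar>g\<bar> * ((1/2)^k) powr g" by (rule powr_le_dyadic[OF k(2,3)])
  finally show ?thesis using k(1) by blast
qed

lemma light_points_at_dyadic_scale:
  fixes \<mu> :: "(real^'m::finite) measure"
  assumes "finite_measure \<mu>" "sets \<mu> = sets borel" "bounded F"
    and cover: "real (cover_num F ((1/2)^(k+2))) \<le> ((1/2)^(k+2)) powr (-g')"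
  obtains S where "S \<in> sets \<mu>"
    "{x\<in>F. measure \<mu> (cube x ((1/2)^(k+1))) < 2 powr \<bar>g\<bar> * ((1/2)^k) powr g} \<subseteq> S"
    "measure \<mu> S \<le> (2 powr g')^2 * 2 powr \<bar>g\<bar> * (2 powr (g' - g))^k"
proof -
  define a where "a = 2 powr \<bar>g\<bar> * ((1/2::real)^k) powr g"
  obtain C where C: "finite C" "card C = cover_num F ((1/2)^(k+2))"
    "F \<subseteq> (\<Union>c\<in>C. cball c ((1/2)^(k+1) / 2))"
    using cover_num_cover[OF assms(3), of "(1/2)^(k+2)"] by auto
  have "a \<ge> 0" by (simp add: a_def)
  then obtain S where S: "S \<in> sets \<mu>" "{x\<in>F. measure \<mu> (cube x ((1/2)^(k+1))) < a} \<subseteq> S"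
    "measure \<mu> S \<le> card C * a"
    by (rule light_points_in_cubes[OF assms(1,2) _ C(1,3)])
  note S(3)
  also have "card C * a \<le> ((1/2)^(k+2)) powr (-g') * a"
    using cover C(2) \<open>a \<ge> 0\<close> by (intro mult_right_mono) auto
  also have "\<dots> = (2 powr g')^2 * 2 powr \<bar>g\<bar> * (2 powr (g' - g))^k"
  proof -
    have "(2::real) powr g' * 2 powr (-g) = 2 powr (g' - g)" by (simp add: powr_add[symmetric])
    then show ?thesis
      unfolding a_def half_power_powr
      by (simp add: power_add power_mult_distrib[symmetric] mult_ac power2_eq_square)
  qed
  finally show thesis
    using that S(1,2) unfolding a_def by blast
qed

lemma light_points_null:
  fixes \<mu> :: "(real^'m::finite) measure"
  assumes "finite_measure \<mu>" "sets \<mu> = sets borel"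
    and "upper_box_dim F < ereal g'" "g' < g"
  shows "\<exists>N\<in>null_sets \<mu>.
           {x\<in>F. \<forall>\<delta>>0. \<exists>r>0. r < \<delta> \<and> measure \<mu> (cube x r) < r powr g} \<subseteq> N"
proof (cases "F = {}")
  case False
  interpret finite_measure \<mu> by (rule assms(1))
  obtain b where b: "b > 0" "\<And>\<delta>. 0 < \<delta> \<Longrightarrow> \<delta> < b \<Longrightarrow> real (cover_num F \<delta>) \<le> \<delta> powr (-g')"
    using cover_num_le_powr_if_upper_box_dim_less[OF assms(3) False] by blast
  have bounded: "bounded F"
    using assms(3) False by (auto simp: upper_box_dim_def split: if_splits)
  obtain K0 where K0: "(1/2::real)^K0 < b"
    using real_arch_pow_inv[OF b(1), of "1/2"] by auto
  define q where "q = (2::real) powr (g' - g)"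
  define B where "B = ((2::real) powr g')^2 * 2 powr \<bar>g\<bar>"
  define T where "T k = {x\<in>F. measure \<mu> (cube x ((1/2)^(k+1))) < 2 powr \<bar>g\<bar> * ((1/2)^k) powr g}"
    for k
  have "\<exists>S\<in>sets \<mu>. T k \<subseteq> S \<and> (k \<ge> K0 \<longrightarrow> measure \<mu> S \<le> B * q^k)" for k
  proof (cases "k \<ge> K0")
    case True
    then have "(1/2::real)^(k+2) < b"
      using K0 power_decreasing[of K0 "k+2" "1/2::real"] by simp
    then have "real (cover_num F ((1/2)^(k+2))) \<le> ((1/2)^(k+2)) powr (-g')"
      using b(2) by simp
    from light_points_at_dyadic_scale[OF assms(1,2) bounded this]
    obtain S where "S \<in> sets \<mu>" "T k \<subseteq> S" "measure \<mu> S \<le> B * q^k"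
      unfolding T_def B_def q_def .
    then show ?thesis by blast
  next
    case False
    have "space \<mu> = UNIV"
      using assms(2) by (metis sets_eq_imp_space_eq space_borel)
    with False show ?thesis by (intro bexI[of _ "space \<mu>"] sets.top) auto
  qed
  then obtain S where S: "\<And>k. S k \<in> sets \<mu>" "\<And>k. T k \<subseteq> S k"
    "\<And>k. k \<ge> K0 \<Longrightarrow> measure \<mu> (S k) \<le> B * q^k"
    by metis
  have "q < 1"
    using assms(4) powr_less_mono[of "g' - g" 0 2] by (simp add: q_def)
  then have "summable (\<lambda>k. B * q^k)"
    by (intro summable_mult summable_geometric) (simp add: q_def)
  then have "summable (\<lambda>k. measure \<mu> (S k))"
    by (rule summable_comparison_test'[where N=K0]) (simp add: S(3))
  then have null: "limsup S \<in> null_sets \<mu>"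
    using S(1) by (intro borel_cantelli_limsup1) (auto simp: less_top[symmetric])
  have "x \<in> limsup S"
    if xF: "x \<in> F" and light: "\<forall>\<delta>>0. \<exists>r>0. r < \<delta> \<and> measure \<mu> (cube x r) < r powr g" for x
  proof -
    have "\<exists>k\<ge>n. x \<in> T k" for n
      using frequently_light_at_dyadic_scales[OF assms(1,2) light[rule_format]] xF
      by (auto simp: T_def)
    then show ?thesis unfolding limsup_INF_SUP using S(2) by blast
  qed
  with null show ?thesis by blast
qed (auto intro: bexI[of _ "{}"])

lemma frequently_less_powr_if_Liminf_zero:
  fixes f :: "real \<Rightarrow> ennreal"
  assumes "Liminf (at_right 0) (\<lambda>r. ennreal (r powr (-\<gamma>)) * f r) = 0" "\<delta> > 0"
  shows "\<exists>r>0. r < \<delta> \<and> f r < ennreal (r powr \<gamma>)"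
proof -
  have "\<not> 1 \<le> Liminf (at_right 0) (\<lambda>r. ennreal (r powr (-\<gamma>)) * f r)"
    using assms(1) by simp
  then obtain y where y: "y < 1" "\<not> eventually (\<lambda>r. y < ennreal (r powr (-\<gamma>)) * f r) (at_right 0)"
    unfolding le_Liminf_iff by blast
  then obtain r where r: "r > 0" "r < \<delta>" "ennreal (r powr (-\<gamma>)) * f r < 1"
    using assms(2) unfolding eventually_at_right_field by (force simp: not_less)
  have "f r = ennreal (r powr \<gamma>) * (ennreal (r powr (-\<gamma>)) * f r)"
    using r(1) by (simp add: mult.assoc[symmetric] ennreal_mult[symmetric] powr_add[symmetric])
  also have "\<dots> < ennreal (r powr \<gamma>) * 1"
    using r by (intro ennreal_mult_strict_left_mono) auto
  finally show ?thesis using r(1,2) by auto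
qed

lemma ereal_le_packing_dim_measure:
  fixes \<mu> :: "'a::metric_space measure"
  assumes "sets \<mu> = sets borel" "AE x in \<mu>. P x"
    and null: "\<And>F. upper_box_dim F < ereal \<gamma> \<Longrightarrow> \<exists>N\<in>null_sets \<mu>. {x\<in>F. P x} \<subseteq> N"
  shows "ereal \<gamma> \<le> packing_dim_measure \<mu>"
  unfolding packing_dim_measure_def packing_dim_def
proof (intro INF_greatest, clarify)
  fix E and F :: "nat \<Rightarrow> 'a set"
  assume E: "E \<in> sets borel" "measure \<mu> E > 0" "E \<subseteq> (\<Union>i. F i)"
  obtain N0 where N0: "{x\<in>space \<mu>. \<not> P x} \<subseteq> N0" "N0 \<in> null_sets \<mu>"
    using assms(2) by (auto elim!: AE_E)
  show "ereal \<gamma> \<le> (SUP i. upper_box_dim (F i))"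
  proof (rule ccontr)
    assume "\<not> ereal \<gamma> \<le> (SUP i. upper_box_dim (F i))"
    then have "upper_box_dim (F i) < ereal \<gamma>" for i
      using SUP_upper[of i UNIV "\<lambda>i. upper_box_dim (F i)"] by (simp add: not_le)
    then have "\<forall>i. \<exists>N. N \<in> null_sets \<mu> \<and> {x\<in>F i. P x} \<subseteq> N"
      using null by blast
    then obtain N where N: "\<And>i. N i \<in> null_sets \<mu>" "\<And>i. {x\<in>F i. P x} \<subseteq> N i"
      by metis
    have "space \<mu> = UNIV"
      using assms(1) by (metis sets_eq_imp_space_eq space_borel)
    have cover: "E \<subseteq> N0 \<union> (\<Union>i. N i)"
    proof
      fix x assume "x \<in> E"
      then obtain i where "x \<in> F i" using E(3) by blast
      then show "x \<in> N0 \<union> (\<Union>i. N i)"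
        using N0(1) N(2)[of i] \<open>space \<mu> = UNIV\<close> by blast
    qed
    have null_union: "N0 \<union> (\<Union>i. N i) \<in> null_sets \<mu>"
      using N0(2) N(1) by (intro null_sets.Un null_sets_UN) auto
    have "E \<in> sets \<mu>"
      using E(1) assms(1) by simp
    have "E \<in> null_sets \<mu>"
      using null_union \<open>E \<in> sets \<mu>\<close> cover by (rule null_sets_subset)
    then show False
      using E(2) by (simp add: measure_def null_setsD1)
  qed
qed

lemma ereal_le_packing_dim_measure_if_AE_Liminf_zero:
  fixes \<mu> :: "(real^'m::finite) measure"
  assumes "finite_measure \<mu>" "sets \<mu> = sets borel"
    and "AE x in \<mu>. Liminf (at_right 0) (\<lambda>r. ennreal (r powr (-\<gamma>)) * Gfun U \<mu> x r) = 0"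
  shows "ereal \<gamma> \<le> packing_dim_measure \<mu>"
proof (rule ereal_le_packing_dim_measure[OF assms(2)])
  interpret finite_measure \<mu> by (rule assms(1))
  show "AE x in \<mu>. \<forall>\<delta>>0. \<exists>r>0. r < \<delta> \<and> measure \<mu> (cube x r) < r powr \<gamma>"
    using assms(3)
  proof eventually_elim
    case (elim x)
    have Liminf: "Liminf (at_right 0) (\<lambda>r. ennreal (r powr (-\<gamma>)) * emeasure \<mu> (cube x r)) = 0"
    proof (rule antisym[OF _ zero_le])
      have "eventually (\<lambda>r. ennreal (r powr (-\<gamma>)) * emeasure \<mu> (cube x r)
              \<le> ennreal (r powr (-\<gamma>)) * Gfun U \<mu> x r) (at_right 0)"
        using eventually_at_right_less[of 0]
        by eventually_elim (intro mult_left_mono emeasure_cube_le_Gfun assms(2); simp)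
      from Liminf_mono[OF this] elim
      show "Liminf (at_right 0) (\<lambda>r. ennreal (r powr (-\<gamma>)) * emeasure \<mu> (cube x r)) \<le> 0"
        by simp
    qed
    show ?case
    proof (intro allI impI)
      fix \<delta> :: real assume "\<delta> > 0"
      then obtain r where "r > 0" "r < \<delta>" "emeasure \<mu> (cube x r) < ennreal (r powr \<gamma>)"
        using frequently_less_powr_if_Liminf_zero[OF Liminf] by blast
      then show "\<exists>r>0. r < \<delta> \<and> measure \<mu> (cube x r) < r powr \<gamma>"
        by (auto simp: emeasure_eq_measure ennreal_less_iff)
    qed
  qed
next
  fix F :: "(real^'m) set"
  assume "upper_box_dim F < ereal \<gamma>"
  then obtain g' where "upper_box_dim F < ereal g'" "ereal g' < ereal \<gamma>"
    using ereal_dense2 by blast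
  then have "upper_box_dim F < ereal g'" "g' < \<gamma>" by simp_all
  then show "\<exists>N\<in>null_sets \<mu>. {x\<in>F. \<forall>\<delta>>0. \<exists>r>0. r < \<delta> \<and> measure \<mu> (cube x r) < r powr \<gamma>} \<subseteq> N"
    by (rule light_points_null[OF assms(1,2)])
qed

section \<open>Upper bound for the packing dimension\<close>

lemma harm_le_1_plus_ln: "n \<ge> 1 \<Longrightarrow> (harm n :: real) \<le> 1 + ln (real n)"
proof (induction n rule: dec_induct)
  case base
  then show ?case by (simp add: harm_expand)
next
  case (step n)
  have n: "real n \<ge> 1" using step.hyps by simp
  have "ln (real n / real (Suc n)) \<le> real n / real (Suc n) - 1"
    using n by (intro ln_le_minus_one) simp
  also have "\<dots> = - (1 / real (Suc n))" by (simp add: field_simps)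
  finally have "1 / real (Suc n) \<le> ln (real (Suc n)) - ln (real n)"
    using n by (simp add: ln_div)
  then show ?case
    using step.IH by (simp add: harm_Suc divide_inverse)
qed

lemma sum_inverse_dist_le_harm:
  fixes w :: real and M :: int
  assumes A: "A \<subseteq> {-M..M}" and w: "\<And>k. k \<in> A \<Longrightarrow> w + 2 < real_of_int k"
  shows "(\<Sum>k\<in>A. 1 / (real_of_int k - w - 1)) \<le> harm (nat (2*M+1))"
proof (cases "A = {}")
  case True then show ?thesis by (simp add: harm_nonneg)
next
  case False
  then have M: "M \<ge> 0" using A by auto
  define c where "c = max \<lceil>w + 2\<rceil> (-M)"
  have kc: "c \<le> k" if "k \<in> A" for k
  proof -
    have "\<lceil>w + 2\<rceil> \<le> k" using w[OF that] ceiling_le_iff[of "w + 2" k] by linarith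
    with A that show ?thesis by (auto simp: c_def)
  qed
  define j where "j k = nat (k - c)" for k
  have inj: "inj_on j A"
    using kc by (intro inj_onI) (fastforce simp: j_def eq_nat_nat_iff)
  have range: "j ` A \<subseteq> {..<nat (2*M+1)}"
    using A kc M by (auto simp: j_def c_def)
  have "1 / (real_of_int k - w - 1) \<le> inverse (of_nat (Suc (j k)))" if "k \<in> A" for k
  proof -
    have "real (Suc (j k)) \<le> real_of_int k - w - 1"
      using kc[OF that] by (simp add: j_def c_def) linarith
    then show ?thesis by (simp add: divide_inverse le_imp_inverse_le)
  qed
  then have "(\<Sum>k\<in>A. 1 / (real_of_int k - w - 1)) \<le> (\<Sum>k\<in>A. inverse (of_nat (Suc (j k))))"
    by (rule sum_mono)
  also have "\<dots> = (\<Sum>x\<in>j ` A. inverse (of_nat (Suc x)))"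
    by (rule sum.reindex[OF inj, symmetric, unfolded comp_def])
  also have "\<dots> \<le> (\<Sum>x<nat (2*M+1). inverse (of_nat (Suc x)))"
    by (rule sum_mono2[OF _ range]) auto
  also have "\<dots> = harm (nat (2*M+1))" by (simp add: harm_altdef)
  finally show ?thesis .
qed

definition near_weight :: "real \<Rightarrow> int \<Rightarrow> real" where
  "near_weight w k = (if \<bar>w - real_of_int k\<bar> \<le> 2 then 1 else 0)"

definition decay_weight :: "real \<Rightarrow> int \<Rightarrow> real" where
  "decay_weight w k = (if \<bar>w - real_of_int k\<bar> \<le> 2 then 1 else 1 / (\<bar>w - real_of_int k\<bar> - 1))"

lemma near_weight_nonneg: "near_weight w k \<ge> 0"
  by (simp add: near_weight_def)

lemma decay_weight_nonneg: "decay_weight w k \<ge> 0"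
  by (simp add: decay_weight_def)

lemma sum_near_weight_le: "(\<Sum>k\<in>{-M..M}. near_weight w k) \<le> 5"
proof -
  define a where "a = \<lceil>w - 2\<rceil>"
  have "{k\<in>{-M..M}. \<bar>w - real_of_int k\<bar> \<le> 2} \<subseteq> {a..a+4}"
    unfolding a_def by (auto simp: abs_le_iff) linarith+
  then have "card {k\<in>{-M..M}. \<bar>w - real_of_int k\<bar> \<le> 2} \<le> 5"
    using card_mono[of "{a..a+4}"] by fastforce
  moreover have "(\<Sum>k\<in>{-M..M}. near_weight w k) = (\<Sum>k\<in>{k\<in>{-M..M}. \<bar>w - real_of_int k\<bar> \<le> 2}. 1)"
    unfolding near_weight_def by (rule sum.inter_filter[symmetric]) simp
  ultimately show ?thesis by simp
qed

lemma sum_decay_weight_le: "(\<Sum>k\<in>{-M..M}. decay_weight w k) \<le> 5 + 2 * harm (nat (2*M+1))"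
proof -
  define right where
    "right k = (if w + 2 < real_of_int k then 1 / (real_of_int k - w - 1) else 0)" for k
  define left where
    "left k = (if real_of_int k < w - 2 then 1 / (w - real_of_int k - 1) else 0)" for k
  have "decay_weight w k \<le> near_weight w k + right k + left k" for k
    by (auto simp: decay_weight_def near_weight_def right_def left_def abs_if)
  then have "(\<Sum>k\<in>{-M..M}. decay_weight w k)
      \<le> (\<Sum>k\<in>{-M..M}. near_weight w k) + (\<Sum>k\<in>{-M..M}. right k) + (\<Sum>k\<in>{-M..M}. left k)"
    by (simp add: sum_mono flip: sum.distrib)
  also have "(\<Sum>k\<in>{-M..M}. right k) \<le> harm (nat (2*M+1))"
    unfolding right_def sum.If_cases[OF finite_atLeastAtMost_int]
    by (simp, rule sum_inverse_dist_le_harm) auto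
  also have "(\<Sum>k\<in>{-M..M}. left k) \<le> harm (nat (2*M+1))"
  proof -
    define A where "A = {k\<in>{-M..M}. real_of_int k < w - 2}"
    have "(\<Sum>k\<in>{-M..M}. left k) = (\<Sum>k\<in>A. 1 / (w - real_of_int k - 1))"
      unfolding left_def A_def by (rule sum.inter_filter[symmetric]) simp
    also have "\<dots> = (\<Sum>k\<in>uminus ` A. 1 / (real_of_int k - (-w) - 1))"
      by (subst sum.reindex) (auto intro: inj_onI)
    also have "\<dots> \<le> harm (nat (2*M+1))"
      by (rule sum_inverse_dist_le_harm) (auto simp: A_def)
    finally show ?thesis .
  qed
  finally show ?thesis using sum_near_weight_le[where w=w and M=M] by linarith
qed

definition grid_cell :: "real \<Rightarrow> real^'m::finite \<Rightarrow> 'm \<Rightarrow> int" where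
  "grid_cell r x = (\<lambda>i. \<lfloor>x$i / r\<rfloor>)"

definition grid_weight :: "'m set \<Rightarrow> real^'m::finite \<Rightarrow> real \<Rightarrow> 'm \<Rightarrow> int \<Rightarrow> real" where
  "grid_weight U z r i k = (if i \<in> U then near_weight (z$i / r) k else decay_weight (z$i / r) k)"

lemma grid_weight_nonneg: "grid_weight U z r i k \<ge> 0"
  by (simp add: grid_weight_def near_weight_nonneg decay_weight_nonneg)

lemma Gkernel_le_grid_weight:
  assumes r: "r > 0"
  shows "Gkernel U x r z \<le> ennreal (\<Prod>i\<in>UNIV. grid_weight U z r i (grid_cell r x i))"
proof (cases "\<forall>i\<in>U. \<bar>z$i - x$i\<bar> \<le> r")
  case False
  then show ?thesis by (simp add: Gkernel_def)
next
  case True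
  have near: "\<bar>z$i / r - \<lfloor>x$i / r\<rfloor>\<bar> < \<bar>(z$i - x$i) / r\<bar> + 1" for i
    using floor_correct[of "x$i / r"] by (simp add: diff_divide_distrib) linarith
  have "grid_weight U z r i (grid_cell r x i) = 1" if "i \<in> U" for i
  proof -
    have "\<bar>(z$i - x$i) / r\<bar> \<le> 1" using True that r by (simp add: abs_divide)
    with near[of i] that show ?thesis by (simp add: grid_weight_def near_weight_def grid_cell_def)
  qed
  then have "(\<Prod>i\<in>UNIV. grid_weight U z r i (grid_cell r x i))
      = (\<Prod>i\<in>-U. grid_weight U z r i (grid_cell r x i))"
    by (intro prod.mono_neutral_right) auto
  moreover have "Ifac ((z$i - x$i) / r) \<le> grid_weight U z r i (grid_cell r x i)" if "i \<in> -U" for i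
  proof -
    define s where "s = (z$i - x$i) / r"
    define d where "d = \<bar>z$i / r - \<lfloor>x$i / r\<rfloor>\<bar>"
    have weight: "grid_weight U z r i (grid_cell r x i) = (if d \<le> 2 then 1 else 1 / (d - 1))"
      using that by (simp add: grid_weight_def decay_weight_def grid_cell_def d_def)
    show ?thesis
    proof (cases "d \<le> 2")
      case False
      have "\<bar>s\<bar> > d - 1" using near[of i] by (simp add: s_def d_def)
      then have "Ifac s \<le> 1 / \<bar>s\<bar>" "1 / \<bar>s\<bar> \<le> 1 / (d - 1)"
        using False by (auto intro!: Ifac_le_inverse divide_left_mono)
      with False weight show ?thesis by (simp add: s_def)
    qed (use weight Ifac_le_1 in simp)
  qed
  then have "(\<Prod>i\<in>-U. Ifac ((z$i - x$i) / r)) \<le> (\<Prod>i\<in>-U. grid_weight U z r i (grid_cell r x i))"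
    by (intro prod_mono) (simp add: Ifac_nonneg)
  ultimately show ?thesis
    using True by (simp add: Gkernel_def ennreal_leI)
qed

lemma grid_cell_in_PiE:
  assumes "r > 0" "\<And>i. \<bar>x$i\<bar> \<le> m"
  shows "grid_cell r x \<in> PiE UNIV (\<lambda>_. {-(\<lceil>m/r\<rceil>+1)..\<lceil>m/r\<rceil>+1})"
proof -
  have "\<lfloor>x$i / r\<rfloor> \<in> {-(\<lceil>m/r\<rceil>+1)..\<lceil>m/r\<rceil>+1}" for i
  proof -
    have "\<bar>x$i / r\<bar> \<le> m / r" using assms by (simp add: abs_divide divide_right_mono)
    then have "-(m / r) \<le> x$i / r" "x$i / r \<le> m / r" by linarith+
    then have "\<lfloor>-(m / r)\<rfloor> \<le> \<lfloor>x$i / r\<rfloor>" "\<lceil>x$i / r\<rceil> \<le> \<lceil>m / r\<rceil>"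
      by (auto intro!: floor_mono ceiling_mono)
    then show ?thesis
      by (simp add: floor_minus) (use floor_le_ceiling[of "x$i / r"] in linarith)
  qed
  then show ?thesis by (simp add: grid_cell_def PiE_UNIV_domain)
qed

lemma sum_Gkernel_grid_le:
  fixes x :: "('m::finite \<Rightarrow> int) \<Rightarrow> real^'m"
  assumes r: "r > 0" and Q: "Q \<subseteq> PiE UNIV (\<lambda>_. {-M..M})"
    and cell: "\<And>q. q \<in> Q \<Longrightarrow> grid_cell r (x q) = q"
  shows "(\<Sum>q\<in>Q. Gkernel U (x q) r z) \<le> ennreal ((5 + 2 * harm (nat (2*M+1))) ^ CARD('m))"
proof -
  have finite: "finite (PiE (UNIV::'m set) (\<lambda>_. {-M..M}))" by (intro finite_PiE) auto
  have "(\<Sum>q\<in>Q. Gkernel U (x q) r z) \<le> (\<Sum>q\<in>Q. ennreal (\<Prod>i\<in>UNIV. grid_weight U z r i (q i)))"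
  proof (rule sum_mono)
    fix q assume "q \<in> Q"
    show "Gkernel U (x q) r z \<le> ennreal (\<Prod>i\<in>UNIV. grid_weight U z r i (q i))"
      using Gkernel_le_grid_weight[OF r, of U "x q" z] cell[OF \<open>q \<in> Q\<close>] by simp
  qed
  also have "\<dots> = ennreal (\<Sum>q\<in>Q. \<Prod>i\<in>UNIV. grid_weight U z r i (q i))"
    by (rule sum_ennreal) (simp add: prod_nonneg grid_weight_nonneg)
  also have "\<dots> \<le> ennreal (\<Sum>q\<in>PiE UNIV (\<lambda>_. {-M..M}). \<Prod>i\<in>UNIV. grid_weight U z r i (q i))"
    by (intro ennreal_leI sum_mono2[OF finite Q]) (simp add: prod_nonneg grid_weight_nonneg)
  also have "\<dots> = ennreal (\<Prod>i\<in>UNIV. \<Sum>k\<in>{-M..M}. grid_weight U z r i k)"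
    by (simp add: prod_sum_PiE)
  also have "\<dots> \<le> ennreal (\<Prod>i\<in>(UNIV::'m set). 5 + 2 * harm (nat (2*M+1)))"
  proof (intro ennreal_leI prod_mono conjI)
    fix i
    show "0 \<le> (\<Sum>k\<in>{-M..M}. grid_weight U z r i k)"
      by (simp add: sum_nonneg grid_weight_nonneg)
    have "(\<Sum>k\<in>{-M..M}. near_weight (z$i / r) k) \<le> 5 + 2 * harm (nat (2*M+1))"
      by (intro add_increasing2) (simp_all add: harm_nonneg sum_near_weight_le)
    then show "(\<Sum>k\<in>{-M..M}. grid_weight U z r i k) \<le> 5 + 2 * harm (nat (2*M+1))"
      by (cases "i \<in> U") (simp_all add: grid_weight_def sum_decay_weight_le)
  qed
  finally show ?thesis by simp
qed

lemma card_grid_cells_le: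
  fixes \<mu> :: "(real^'m::finite) measure" and c :: real
  assumes "prob_space \<mu>" "sets \<mu> = sets borel" "r > 0" "c \<ge> 0"
    and bounded: "\<And>x i. x \<in> P \<Longrightarrow> \<bar>x$i\<bar> \<le> m"
    and G: "\<And>x. x \<in> P \<Longrightarrow> ennreal c \<le> Gfun U \<mu> x r"
  shows "card (grid_cell r ` P) * c \<le> (5 + 2 * harm (nat (2*(\<lceil>m/r\<rceil>+1)+1))) ^ CARD('m)"
proof -
  interpret prob_space \<mu> by (rule assms(1))
  define M where "M = \<lceil>m/r\<rceil>+1"
  define Q where "Q = grid_cell r ` P"
  define bound where "bound = (5 + 2 * harm (nat (2*M+1)) :: real) ^ CARD('m)"
  have Q: "Q \<subseteq> PiE UNIV (\<lambda>_. {-M..M})"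
    using grid_cell_in_PiE[OF assms(3) bounded] by (auto simp: Q_def M_def)
  then have "finite Q" by (rule finite_subset) (intro finite_PiE, auto)
  obtain x where x: "\<And>q. q \<in> Q \<Longrightarrow> x q \<in> P \<and> grid_cell r (x q) = q"
    unfolding Q_def by (metis f_inv_into_f inv_into_into)
  have "ennreal (card Q * c) = (\<Sum>q\<in>Q. ennreal c)"
    using assms(4) by (simp add: ennreal_of_nat_eq_real_of_nat ennreal_mult)
  also have "\<dots> \<le> (\<Sum>q\<in>Q. \<integral>\<^sup>+ z. Gkernel U (x q) r z \<partial>\<mu>)"
    using G x by (intro sum_mono) (simp add: Gfun_eq_nn_integral_Gkernel)
  also have "\<dots> = (\<integral>\<^sup>+ z. (\<Sum>q\<in>Q. Gkernel U (x q) r z) \<partial>\<mu>)"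
    using borel_measurable_Gkernel assms(2)
    by (intro nn_integral_sum[symmetric]) (simp add: measurable_cong_sets[OF assms(2) refl])
  also have "\<dots> \<le> (\<integral>\<^sup>+ z. ennreal bound \<partial>\<mu>)"
    using sum_Gkernel_grid_le[OF assms(3) Q] x by (intro nn_integral_mono) (simp add: bound_def)
  also have "\<dots> = ennreal bound" by (simp add: emeasure_space_1)
  finally have "card Q * c \<le> bound"
    by (simp add: bound_def harm_nonneg ennreal_le_iff)
  then show ?thesis by (simp add: Q_def bound_def M_def)
qed

lemma bounded_if_coordinates_bounded:
  fixes P :: "(real^'m::finite) set"
  assumes "\<And>x i. x \<in> P \<Longrightarrow> \<bar>x$i\<bar> \<le> m"
  shows "bounded P"
  unfolding bounded_iff
proof (intro exI ballI)
  fix x assume "x \<in> P"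
  have "norm x \<le> (\<Sum>i\<in>UNIV. \<bar>x$i\<bar>)" by (rule norm_le_l1_cart)
  also have "\<dots> \<le> (\<Sum>i\<in>(UNIV::'m set). m)" using assms \<open>x \<in> P\<close> by (intro sum_mono) auto
  finally show "norm x \<le> real CARD('m) * m" by simp
qed

lemma cover_num_closure_le_card_grid_cells:
  fixes P :: "(real^'m::finite) set" and r :: real
  assumes r: "r > 0" and bounded: "\<And>x i. x \<in> P \<Longrightarrow> \<bar>x$i\<bar> \<le> m"
  shows "cover_num (closure P) (CARD('m) * r) \<le> card (grid_cell r ` P)"
proof -
  define Q where "Q = grid_cell r ` P"
  have "grid_cell r x \<in> PiE UNIV (\<lambda>_. {-(\<lceil>m/r\<rceil>+1)..\<lceil>m/r\<rceil>+1})" if "x \<in> P" for x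
    using grid_cell_in_PiE[OF r bounded[OF that]] .
  then have "Q \<subseteq> PiE UNIV (\<lambda>_. {-(\<lceil>m/r\<rceil>+1)..\<lceil>m/r\<rceil>+1})"
    by (auto simp: Q_def)
  then have "finite Q" by (rule finite_subset) (intro finite_PiE, auto)
  obtain y where y: "\<And>q. q \<in> Q \<Longrightarrow> y q \<in> P \<and> grid_cell r (y q) = q"
    unfolding Q_def by (metis f_inv_into_f inv_into_into)
  have "dist (y (grid_cell r x)) x \<le> CARD('m) * r" if "x \<in> P" for x
  proof -
    have "grid_cell r (y (grid_cell r x)) = grid_cell r x"
      using y that by (simp add: Q_def)
    then have same: "\<lfloor>y (grid_cell r x) $ i / r\<rfloor> = \<lfloor>x $ i / r\<rfloor>" for i
      unfolding grid_cell_def by meson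
    have "\<bar>y (grid_cell r x) $ i / r - x $ i / r\<bar> \<le> 1" for i
      using same[of i] floor_correct[of "y (grid_cell r x) $ i / r"] floor_correct[of "x $ i / r"]
      by linarith
    then have "\<bar>(y (grid_cell r x) - x) $ i\<bar> \<le> r" for i
      using r by (simp add: diff_divide_distrib[symmetric] abs_divide)
    then have "norm (y (grid_cell r x) - x) \<le> (\<Sum>i\<in>(UNIV::'m set). r)"
      by (intro order_trans[OF norm_le_l1_cart] sum_mono)
    then show ?thesis by (simp add: dist_norm)
  qed
  then have "P \<subseteq> (\<Union>c\<in>y ` Q. cball c (CARD('m) * r))"
    by (force simp: Q_def)
  moreover have "closed (\<Union>c\<in>y ` Q. cball c (CARD('m) * r))"
    using \<open>finite Q\<close> by (intro closed_UN) auto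
  ultimately have "closure P \<subseteq> (\<Union>c\<in>y ` Q. cball c (CARD('m) * r))"
    by (rule closure_minimal)
  then have "cover_num (closure P) (CARD('m) * r) \<le> card (y ` Q)"
    using \<open>finite Q\<close> by (intro cover_num_le) auto
  also have "\<dots> \<le> card Q" using \<open>finite Q\<close> by (rule card_image_le)
  finally show ?thesis by (simp add: Q_def)
qed

lemma harm_grid_bound_le_ln:
  fixes m r :: real
  assumes "m > 0" "r > 0"
  shows "5 + 2 * harm (nat (2*(\<lceil>m/r\<rceil>+1)+1)) \<le> 7 + 2 * ln (2 * m / r + 5)"
proof -
  define n where "n = nat (2*(\<lceil>m/r\<rceil>+1)+1)"
  have "0 < \<lceil>m/r\<rceil>" using divide_pos_pos[OF assms] by simp
  then have int_n: "int n = 2 * \<lceil>m/r\<rceil> + 3" by (simp add: n_def)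
  have n: "real n = 2 * real_of_int \<lceil>m/r\<rceil> + 3" "n \<ge> 1"
    using arg_cong[OF int_n, of real_of_int] int_n \<open>0 < \<lceil>m/r\<rceil>\<close> by simp_all linarith
  then have "real n \<le> 2 * m / r + 5"
    using ceiling_correct[of "m/r"] by simp
  then have "ln (real n) \<le> ln (2 * m / r + 5)"
    using n(2) by (intro ln_mono) auto
  then have "harm n \<le> 1 + ln (2 * m / r + 5)"
    using harm_le_1_plus_ln[OF n(2)] by linarith
  then show ?thesis by (simp add: n_def)
qed

lemma cover_num_closure_le_powr:
  fixes \<mu> :: "(real^'m::finite) measure" and r :: real
  assumes "prob_space \<mu>" "sets \<mu> = sets borel" "m > 0" "0 < r" "r < 1/m"
    and bounded: "\<And>x i. x \<in> P \<Longrightarrow> \<bar>x$i\<bar> \<le> m"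
    and G: "\<And>x r. x \<in> P \<Longrightarrow> 0 < r \<Longrightarrow> r < 1/m \<Longrightarrow> ennreal (r powr \<gamma> / m) \<le> Gfun U \<mu> x r"
  shows "real (cover_num (closure P) (CARD('m) * r))
           \<le> m * r powr (-\<gamma>) * (7 + 2 * ln (2 * m / r + 5)) ^ CARD('m)"
proof -
  define \<Phi> where "\<Phi> = 7 + 2 * ln (2 * m / r + 5)"
  have "card (grid_cell r ` P) * (r powr \<gamma> / m)
      \<le> (5 + 2 * harm (nat (2*(\<lceil>m/r\<rceil>+1)+1))) ^ CARD('m)"
  proof (rule card_grid_cells_le[OF assms(1,2,4) _ bounded])
    show "0 \<le> r powr \<gamma> / m" using assms(3) by simp
    show "ennreal (r powr \<gamma> / m) \<le> Gfun U \<mu> x r" if "x \<in> P" for x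
      using G[OF that assms(4,5)] .
  qed
  also have "\<dots> \<le> \<Phi> ^ CARD('m)"
    unfolding \<Phi>_def using harm_grid_bound_le_ln[OF assms(3,4)]
    by (intro power_mono) (auto simp: harm_nonneg add_nonneg_nonneg)
  finally have "card (grid_cell r ` P) \<le> m * r powr (-\<gamma>) * \<Phi> ^ CARD('m)"
    using assms(3,4) by (simp add: field_simps powr_minus)
  moreover have "cover_num (closure P) (CARD('m) * r) \<le> card (grid_cell r ` P)"
    by (rule cover_num_closure_le_card_grid_cells[OF assms(4)]) (rule bounded)
  ultimately show ?thesis by (simp add: \<Phi>_def)
qed

lemma ln_cover_num_closure_le:
  fixes \<mu> :: "(real^'m::finite) measure"
  assumes "prob_space \<mu>" "sets \<mu> = sets borel" "m > 0" "P \<noteq> {}"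
    and bounded: "\<And>x i. x \<in> P \<Longrightarrow> \<bar>x$i\<bar> \<le> m"
    and G: "\<And>x r. x \<in> P \<Longrightarrow> 0 < r \<Longrightarrow> r < 1/m \<Longrightarrow> ennreal (r powr \<gamma> / m) \<le> Gfun U \<mu> x r"
    and d: "0 < d" "d < CARD('m) / m"
  defines "a \<equiv> real CARD('m)"
  shows "ln (real (cover_num (closure P) d))
           \<le> ln m - \<gamma> * ln (d / a) + a * ln (7 + 2 * ln (2 * m * a / d + 5))"
proof -
  have a: "a > 0" by (simp add: a_def)
  have r: "0 < d / a" "d / a < 1/m" using d a assms(3) by (auto simp: field_simps a_def)
  define Y where "Y = 7 + 2 * ln (2 * m * a / d + 5)"
  have "2 * m * a / d > 0" using assms(3) a d(1) by simp
  then have "ln (2 * m * a / d + 5) > 0" by (intro ln_gt_zero) linarith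
  then have Y: "Y > 0" by (simp add: Y_def)
  have "bounded (closure P)"
    using bounded_if_coordinates_bounded[OF bounded] by (rule bounded_closure)
  then have "real (cover_num (closure P) d) \<ge> 1"
    using cover_num_ge_1[OF _ d(1), of "closure P"] assms(4) by simp
  moreover have "real (cover_num (closure P) d) \<le> m * (d / a) powr (-\<gamma>) * Y ^ CARD('m)"
    using cover_num_closure_le_powr[OF assms(1-3) r bounded G] a by (simp add: a_def Y_def)
  ultimately have "ln (real (cover_num (closure P) d)) \<le> ln (m * (d / a) powr (-\<gamma>) * Y ^ CARD('m))"
    by (intro ln_mono) auto
  also have "\<dots> = ln m + ln ((d / a) powr (-\<gamma>)) + ln (Y ^ CARD('m))"
    using assms(3) r(1) Y d(1) a by (simp add: ln_mult)
  also have "\<dots> = ln m - \<gamma> * ln (d / a) + a * ln Y"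
    using r(1) Y by (simp add: ln_powr ln_realpow a_def)
  finally show ?thesis by (simp add: Y_def)
qed

lemma upper_box_dim_closure_le:
  fixes \<mu> :: "(real^'m::finite) measure"
  assumes "prob_space \<mu>" "sets \<mu> = sets borel" "m > 0" "P \<noteq> {}"
    and bounded: "\<And>x i. x \<in> P \<Longrightarrow> \<bar>x$i\<bar> \<le> m"
    and G: "\<And>x r. x \<in> P \<Longrightarrow> 0 < r \<Longrightarrow> r < 1/m \<Longrightarrow> ennreal (r powr \<gamma> / m) \<le> Gfun U \<mu> x r"
  shows "upper_box_dim (closure P) \<le> ereal \<gamma>"
proof -
  define a where "a = real CARD('m)"
  have a: "a > 0" by (simp add: a_def)
  define g where "g d = (ln m - \<gamma> * ln (d / a) + a * ln (7 + 2 * ln (2 * m * a / d + 5))) / - ln d"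
    for d
  have "bounded (closure P)" "closure P \<noteq> {}"
    using bounded_if_coordinates_bounded[OF bounded] assms(4) by (simp_all add: bounded_closure)
  then have dim: "upper_box_dim (closure P)
      = Limsup (at_right 0) (\<lambda>d. ereal (ln (real (cover_num (closure P) d)) / - ln d))"
    by (simp add: upper_box_dim_def)
  have "ln (real (cover_num (closure P) d)) / - ln d \<le> g d" if d: "0 < d" "d < min 1 (a/m)" for d
    unfolding g_def a_def using d a_def
    by (intro divide_right_mono ln_cover_num_closure_le[OF assms(1-4) bounded G]) auto
  then have "eventually (\<lambda>d. ereal (ln (real (cover_num (closure P) d)) / - ln d) \<le> ereal (g d))
      (at_right 0)"
    using a assms(3) unfolding eventually_at_right_field by (intro exI[of _ "min 1 (a/m)"]) auto
  then have "upper_box_dim (closure P) \<le> Limsup (at_right 0) (\<lambda>d. ereal (g d))"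
    unfolding dim by (rule Limsup_mono)
  also have "\<dots> = ereal \<gamma>"
  proof (intro lim_imp_Limsup tendsto_ereal)
    show "(g \<longlongrightarrow> \<gamma>) (at_right 0)"
      unfolding g_def using assms(3) a by real_asymp
  qed simp
  finally show ?thesis .
qed

lemma packing_dim_measure_le_upper_box_dim:
  assumes "E \<in> sets borel" "measure \<mu> E > 0"
  shows "packing_dim_measure \<mu> \<le> upper_box_dim E"
proof -
  have "packing_dim_measure \<mu> \<le> packing_dim E"
    unfolding packing_dim_measure_def using assms by (intro INF_lower) simp
  also have "\<dots> \<le> (SUP i::nat. upper_box_dim E)"
    unfolding packing_dim_def by (rule INF_lower) simp
  finally show ?thesis by simp
qed

lemma powr_le_eventually_if_Liminf_nonzero:
  fixes f :: "real \<Rightarrow> ennreal"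
  assumes "Liminf (at_right 0) (\<lambda>r. ennreal (r powr (-\<gamma>)) * f r) \<noteq> 0"
  obtains b c where "b > 0" "c > 0" "\<And>r. 0 < r \<Longrightarrow> r < b \<Longrightarrow> ennreal (c * r powr \<gamma>) \<le> f r"
proof -
  have "0 < min 1 (Liminf (at_right 0) (\<lambda>r. ennreal (r powr (-\<gamma>)) * f r))"
    using assms by (simp add: zero_less_iff_neq_zero)
  then obtain y where y: "0 < y" "y < min 1 (Liminf (at_right 0) (\<lambda>r. ennreal (r powr (-\<gamma>)) * f r))"
    using dense by blast
  define c where "c = enn2real y"
  have "y < 1" using y(2) by simp
  then have "y < top" by (auto simp: less_top[symmetric])
  then have c: "y = ennreal c" "c > 0"
    using y(1) by (simp_all add: c_def enn2real_positive_iff)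
  have "eventually (\<lambda>r. y < ennreal (r powr (-\<gamma>)) * f r) (at_right 0)"
    using y(2) by (intro less_LiminfD) simp
  then obtain b where b: "b > 0" "\<And>r. 0 < r \<Longrightarrow> r < b \<Longrightarrow> y < ennreal (r powr (-\<gamma>)) * f r"
    unfolding eventually_at_right_field by auto
  show thesis
  proof (rule that[OF b(1) c(2)])
    fix r :: real assume r: "0 < r" "r < b"
    have "ennreal (c * r powr \<gamma>) = ennreal (r powr \<gamma>) * y"
      using c by (simp add: ennreal_mult mult.commute)
    also have "\<dots> \<le> ennreal (r powr \<gamma>) * (ennreal (r powr (-\<gamma>)) * f r)"
      using b(2)[OF r] by (intro mult_left_mono) auto
    also have "\<dots> = f r"
      using r(1) by (simp add: mult.assoc[symmetric] ennreal_mult[symmetric] powr_add[symmetric])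
    finally show "ennreal (c * r powr \<gamma>) \<le> f r" .
  qed
qed

text \<open>The index \<open>m\<close> bounds the coordinates, the scale and the constant at once, so these
  countably many sets cover every point at which the lower limit is positive.\<close>

definition heavy_points :: "'m set \<Rightarrow> (real^'m::finite) measure \<Rightarrow> real \<Rightarrow> nat \<Rightarrow> (real^'m) set"
  where "heavy_points U \<mu> \<gamma> m = {x. (\<forall>i. \<bar>x$i\<bar> \<le> real (Suc m)) \<and>
     (\<forall>r. 0 < r \<and> r < 1 / real (Suc m) \<longrightarrow> ennreal (r powr \<gamma> / real (Suc m)) \<le> Gfun U \<mu> x r)}"

lemma heavy_points_if_Liminf_nonzero:
  assumes "Liminf (at_right 0) (\<lambda>r. ennreal (r powr (-\<gamma>)) * Gfun U \<mu> x r) \<noteq> 0"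
  shows "\<exists>m. x \<in> heavy_points U \<mu> \<gamma> m"
proof -
  obtain b c where bc: "b > 0" "c > 0"
    "\<And>r. 0 < r \<Longrightarrow> r < b \<Longrightarrow> ennreal (c * r powr \<gamma>) \<le> Gfun U \<mu> x r"
    using powr_le_eventually_if_Liminf_nonzero[OF assms] by blast
  obtain m :: nat where m: "real m \<ge> max (max (1/c) (1/b)) (norm x)"
    using real_arch_simple by blast
  have small: "1 / real (Suc m) \<le> c" "1 / real (Suc m) \<le> b"
    using m bc(1,2) by (auto simp: field_simps)
  have "ennreal (r powr \<gamma> / real (Suc m)) \<le> Gfun U \<mu> x r"
    if r: "0 < r" "r < 1 / real (Suc m)" for r
  proof -
    have "r powr \<gamma> / real (Suc m) \<le> c * r powr \<gamma>"
      using mult_right_mono[OF small(1) powr_ge_zero[of r \<gamma>]] by simp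
    then show ?thesis
      using bc(3)[of r] r small(2) by (meson ennreal_leI order_trans less_le_trans)
  qed
  moreover have "\<bar>x$i\<bar> \<le> real (Suc m)" for i
    using component_le_norm_cart[of x i] m by simp
  ultimately show ?thesis unfolding heavy_points_def by blast
qed

lemma packing_dim_measure_le_if_not_AE_Liminf_zero:
  fixes \<mu> :: "(real^'m::finite) measure"
  assumes "prob_space \<mu>" "sets \<mu> = sets borel"
    and "\<not> (AE x in \<mu>. Liminf (at_right 0) (\<lambda>r. ennreal (r powr (-\<gamma>)) * Gfun U \<mu> x r) = 0)"
  shows "packing_dim_measure \<mu> \<le> ereal \<gamma>"
proof -
  interpret prob_space \<mu> by (rule assms(1))
  define P where "P = heavy_points U \<mu> \<gamma>"
  have "\<exists>m. closure (P m) \<notin> null_sets \<mu>"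
  proof (rule ccontr)
    assume "\<not> (\<exists>m. closure (P m) \<notin> null_sets \<mu>)"
    then have null: "(\<Union>m. closure (P m)) \<in> null_sets \<mu>" by auto
    have "{x \<in> space \<mu>. Liminf (at_right 0) (\<lambda>r. ennreal (r powr (-\<gamma>)) * Gfun U \<mu> x r) \<noteq> 0}
        \<subseteq> (\<Union>m. closure (P m))"
    proof
      fix x assume "x \<in> {x \<in> space \<mu>. Liminf (at_right 0) (\<lambda>r. ennreal (r powr (-\<gamma>)) * Gfun U \<mu> x r) \<noteq> 0}"
      then obtain m where "x \<in> P m"
        using heavy_points_if_Liminf_nonzero unfolding P_def by blast
      then show "x \<in> (\<Union>m. closure (P m))" using closure_subset by blast
    qed
    with null have "AE x in \<mu>. Liminf (at_right 0) (\<lambda>r. ennreal (r powr (-\<gamma>)) * Gfun U \<mu> x r) = 0"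
      by (rule AE_I')
    with assms(3) show False by simp
  qed
  then obtain m where m: "closure (P m) \<notin> null_sets \<mu>" by blast
  then have "P m \<noteq> {}" by auto
  have "closure (P m) \<in> sets \<mu>" using assms(2) by simp
  with m have "measure \<mu> (closure (P m)) > 0"
    by (simp add: null_sets_def emeasure_eq_measure zero_less_measure_iff)
  then have "packing_dim_measure \<mu> \<le> upper_box_dim (closure (P m))"
    by (intro packing_dim_measure_le_upper_box_dim) simp
  also have "\<dots> \<le> ereal \<gamma>"
    by (rule upper_box_dim_closure_le[OF assms(1,2) _ \<open>P m \<noteq> {}\<close>])
      (auto simp: P_def heavy_points_def)
  finally show ?thesis .
qed

lemma ereal_eq_Sup_if_threshold:
  fixes L :: ereal
  assumes "\<And>\<gamma>. \<gamma> \<in> S \<Longrightarrow> ereal \<gamma> \<le> L" "\<And>\<gamma>. \<gamma> \<notin> S \<Longrightarrow> L \<le> ereal \<gamma>"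
  shows "L = Sup (ereal ` S)"
proof (rule antisym)
  show "L \<le> Sup (ereal ` S)"
  proof (rule ccontr)
    assume "\<not> L \<le> Sup (ereal ` S)"
    then have "Sup (ereal ` S) < L" by (simp add: not_le)
    then obtain \<gamma> where \<gamma>: "Sup (ereal ` S) < ereal \<gamma>" "ereal \<gamma> < L"
      using ereal_dense2 by blast
    then have "\<gamma> \<notin> S" using Sup_upper[of "ereal \<gamma>" "ereal ` S"] by auto
    then show False using assms(2) \<gamma>(2) by (simp add: not_le[symmetric])
  qed
qed (use assms(1) in \<open>auto intro: Sup_least\<close>)

theorem theorem2p7:
  fixes \<mu> :: "(real^'m::finite) measure" and U :: "'m set"
  assumes "prob_space \<mu>" and "sets \<mu> = sets borel" and "U \<noteq> UNIV"
  shows "packing_dim_measure \<mu> =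
    Sup (ereal ` {\<gamma>::real. AE x in \<mu>.
       Liminf (at_right 0) (\<lambda>r. ennreal (r powr (-\<gamma>)) * Gfun U \<mu> x r) = 0})"
  using ereal_le_packing_dim_measure_if_AE_Liminf_zero[OF prob_space.finite_measure[OF assms(1)] assms(2)]
    packing_dim_measure_le_if_not_AE_Liminf_zero[OF assms(1,2)]
  by (intro ereal_eq_Sup_if_threshold) auto

end
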